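(* Let $L$ be a regular pseudocomplemented de Morgan algebra with dual $pm$-space $P$. If there exist $x,y\in P$ with $\ell_\zeta(x,y)=n$ for some $1\le n<\omega$, then $L$ does not satisfy the identity $(x\wedge x^{\prime\ast})^{(n-1)(\prime\ast)}\approx(x\wedge x^{\prime\ast})^{n(\prime\ast)}$.
   Context: A $pm$-algebra is $(L;\wedge,\vee,{}^\ast,{}^\prime,0,1)$ with bounded distributive lattice reduct, pseudocomplement ${}^\ast$ and de Morgan involution ${}^\prime$; it is regular if any two congruences sharing a class are equal. Its dual $pm$-space $(P;\tau,\le,\zeta)$ is its Priestley space of prime ideals with the order-reversing involution $\zeta(I)=\{a:a'\notin I\}$. Notation: $x^{0(\prime\ast)}=x$, $x^{(k+1)(\prime\ast)}=((x^{k(\prime\ast)})')^\ast$. $\ell(x,y)$ is the distance between $x$ and $y$ in the comparability graph of $(P;\le)$ ($0$ if $x=y$, $\infty$ if not connected). The $\zeta$-distance is $\ell_\zeta(x,y)=\min\{\ell(x,y),\ell(x,\zeta(y))\}$. *)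

theory Defs
  imports Main "HOL-Library.Extended_Nat"
begin
unbundle lattice_syntax

text \<open>A pm-algebra: the carrier is the whole type 'a, a bounded distributive lattice;
  pc is the pseudocomplement (written x^*), dm the de Morgan involution (written x').\<close>

definition is_pseudocomplement :: "('a::{bounded_lattice,distrib_lattice} \<Rightarrow> 'a) \<Rightarrow> bool" where
  "is_pseudocomplement pc \<longleftrightarrow> (\<forall>a b. a \<sqinter> b = bot \<longleftrightarrow> b \<le> pc a)"

definition is_de_morgan_inv :: "('a::{bounded_lattice,distrib_lattice} \<Rightarrow> 'a) \<Rightarrow> bool" where
  "is_de_morgan_inv dm \<longleftrightarrow> (\<forall>a. dm (dm a) = a) \<and> (\<forall>a b. dm (a \<squnion> b) = dm a \<sqinter> dm b)"

definition pm_algebra :: "('a::{bounded_lattice,distrib_lattice} \<Rightarrow> 'a) \<Rightarrow> ('a \<Rightarrow> 'a) \<Rightarrow> bool" where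
  "pm_algebra pc dm \<longleftrightarrow> is_pseudocomplement pc \<and> is_de_morgan_inv dm"

definition pm_congruence :: "('a::{bounded_lattice,distrib_lattice} \<Rightarrow> 'a) \<Rightarrow> ('a \<Rightarrow> 'a) \<Rightarrow> ('a \<Rightarrow> 'a \<Rightarrow> bool) \<Rightarrow> bool" where
  "pm_congruence pc dm \<theta> \<longleftrightarrow> equivp \<theta>
     \<and> (\<forall>a b c d. \<theta> a b \<longrightarrow> \<theta> c d \<longrightarrow> \<theta> (a \<sqinter> c) (b \<sqinter> d))
     \<and> (\<forall>a b c d. \<theta> a b \<longrightarrow> \<theta> c d \<longrightarrow> \<theta> (a \<squnion> c) (b \<squnion> d))
     \<and> (\<forall>a b. \<theta> a b \<longrightarrow> \<theta> (pc a) (pc b))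
     \<and> (\<forall>a b. \<theta> a b \<longrightarrow> \<theta> (dm a) (dm b))"

definition pm_regular :: "('a::{bounded_lattice,distrib_lattice} \<Rightarrow> 'a) \<Rightarrow> ('a \<Rightarrow> 'a) \<Rightarrow> bool" where
  "pm_regular pc dm \<longleftrightarrow> (\<forall>\<theta> \<phi>. pm_congruence pc dm \<theta> \<longrightarrow> pm_congruence pc dm \<phi> \<longrightarrow>
      (\<exists>a b. {x. \<theta> a x} = {x. \<phi> b x}) \<longrightarrow> \<theta> = \<phi>)"

text \<open>Prime ideals (points of the dual Priestley space), ordered by inclusion.\<close>
definition prime_ideal :: "'a::{bounded_lattice,distrib_lattice} set \<Rightarrow> bool" where
  "prime_ideal I \<longleftrightarrow> I \<noteq> {} \<and> I \<noteq> UNIV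
     \<and> (\<forall>a b. a \<in> I \<longrightarrow> b \<le> a \<longrightarrow> b \<in> I)
     \<and> (\<forall>a b. a \<in> I \<longrightarrow> b \<in> I \<longrightarrow> a \<squnion> b \<in> I)
     \<and> (\<forall>a b. a \<sqinter> b \<in> I \<longrightarrow> a \<in> I \<or> b \<in> I)"

definition dual_space :: "'a::{bounded_lattice,distrib_lattice} set set" where
  "dual_space = {I. prime_ideal I}"

definition zeta :: "('a \<Rightarrow> 'a) \<Rightarrow> 'a set \<Rightarrow> 'a set" where
  "zeta dm I = {a. dm a \<notin> I}"

definition comp_path :: "'b set set \<Rightarrow> 'b set \<Rightarrow> 'b set \<Rightarrow> nat \<Rightarrow> bool" where
  "comp_path P x y k \<longleftrightarrow> (\<exists>p :: nat \<Rightarrow> 'b set. p 0 = x \<and> p k = y \<and> (\<forall>i\<le>k. p i \<in> P)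
      \<and> (\<forall>i<k. p i \<noteq> p (Suc i) \<and> (p i \<subseteq> p (Suc i) \<or> p (Suc i) \<subseteq> p i)))"

definition comp_dist :: "'b set set \<Rightarrow> 'b set \<Rightarrow> 'b set \<Rightarrow> enat" where
  "comp_dist P x y = (if \<exists>k. comp_path P x y k then enat (LEAST k. comp_path P x y k) else \<infinity>)"

definition zeta_dist :: "('a::{bounded_lattice,distrib_lattice} \<Rightarrow> 'a) \<Rightarrow> 'a set \<Rightarrow> 'a set \<Rightarrow> enat" where
  "zeta_dist dm x y = min (comp_dist dual_space x y) (comp_dist dual_space x (zeta dm y))"

text \<open>x^{k('*)}: k-fold iteration of x \<mapsto> (x')^*.\<close>
definition pstar_iter :: "('a \<Rightarrow> 'a) \<Rightarrow> ('a \<Rightarrow> 'a) \<Rightarrow> nat \<Rightarrow> 'a \<Rightarrow> 'a" where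
  "pstar_iter pc dm k = (pc \<circ> dm) ^^ k"

end

theory Submission
  imports Defs
begin

(* Regularity makes the congruence a ~ b :<-> a* = b* & a'* = b'* trivial, whence
   a /\ a'*' <= b \/ b* and the prime ideals form a poset of height at most one, in which walks
   starting at a minimal point alternate up and down.
   Write g a = a'*; if J <= I are prime then g maps zeta J into I. Walking back along a shortest path
   u = p_0, ..., p_n = t from a minimal u gives g^(n+1) Z <= u for Z = zeta^(n+1) t. The identity
   yields g^(n-1) a /\ g^n a <= g^(n+1) a, so by primality g^(n-1) Z <= u or g^n Z <= u, and the
   prime ideal theorem turns g^m Z <= u into a path of length at most m from u to zeta^m Z. The first
   case gives a path from u to t shorter than n; in the second, paths of length n from u to t and to
   zeta t would make t and zeta t both minimal or both not, whereas exactly one of them is. *)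

unbundle lattice_syntax

section \<open>Prime ideals\<close>

lemma prime_ideal_bot: "prime_ideal I \<Longrightarrow> bot \<in> I"
  unfolding prime_ideal_def by (metis bot.extremum ex_in_conv)

lemma prime_ideal_top: "prime_ideal I \<Longrightarrow> top \<notin> I"
  unfolding prime_ideal_def by (metis UNIV_eq_I top.extremum)

lemma prime_ideal_down: "prime_ideal I \<Longrightarrow> a \<in> I \<Longrightarrow> b \<le> a \<Longrightarrow> b \<in> I"
  unfolding prime_ideal_def by blast

lemma prime_ideal_sup_iff: "prime_ideal I \<Longrightarrow> a \<squnion> b \<in> I \<longleftrightarrow> a \<in> I \<and> b \<in> I"
  unfolding prime_ideal_def by (meson sup.cobounded1 sup.cobounded2)

lemma prime_ideal_inf_iff: "prime_ideal I \<Longrightarrow> a \<sqinter> b \<in> I \<longleftrightarrow> a \<in> I \<or> b \<in> I"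
  unfolding prime_ideal_def by (meson inf.cobounded1 inf.cobounded2)

lemma prime_ideal_inf_image_cases:
  assumes u: "prime_ideal u" and Z: "prime_ideal Z" and "mono f" "mono h"
    and fh: "\<And>a. a \<in> Z \<Longrightarrow> f a \<sqinter> h a \<in> u"
  shows "(\<forall>a\<in>Z. f a \<in> u) \<or> (\<forall>a\<in>Z. h a \<in> u)"
proof (rule ccontr)
  assume "\<not> ?thesis"
  then obtain a b where a: "a \<in> Z" "f a \<notin> u" and b: "b \<in> Z" "h b \<notin> u" by blast
  have "f (a \<squnion> b) \<sqinter> h (a \<squnion> b) \<in> u"
    using a(1) b(1) fh prime_ideal_sup_iff[OF Z] by blast
  moreover have "f a \<le> f (a \<squnion> b)" "h b \<le> h (a \<squnion> b)"
    using \<open>mono f\<close> \<open>mono h\<close> by (simp_all add: monoD)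
  ultimately show False
    using a(2) b(2) prime_ideal_down[OF u] prime_ideal_inf_iff[OF u] by blast
qed

definition lattice_ideal :: "'a::{bounded_lattice,distrib_lattice} set \<Rightarrow> bool" where
  "lattice_ideal J \<longleftrightarrow> bot \<in> J \<and> (\<forall>a b. a \<in> J \<longrightarrow> b \<le> a \<longrightarrow> b \<in> J)
     \<and> (\<forall>a b. a \<in> J \<longrightarrow> b \<in> J \<longrightarrow> a \<squnion> b \<in> J)"

lemma lattice_ideal_adjoin:
  assumes "lattice_ideal M"
  shows "lattice_ideal {w. \<exists>m\<in>M. w \<le> m \<squnion> a}"
  unfolding lattice_ideal_def
proof (intro conjI allI impI)
  show "bot \<in> {w. \<exists>m\<in>M. w \<le> m \<squnion> a}"
    using assms unfolding lattice_ideal_def by auto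
next
  fix v w assume "v \<in> {w. \<exists>m\<in>M. w \<le> m \<squnion> a}" "w \<le> v"
  then show "w \<in> {w. \<exists>m\<in>M. w \<le> m \<squnion> a}" using order_trans by blast
next
  fix v w assume "v \<in> {w. \<exists>m\<in>M. w \<le> m \<squnion> a}" "w \<in> {w. \<exists>m\<in>M. w \<le> m \<squnion> a}"
  then obtain m1 m2 where "m1 \<in> M" "m2 \<in> M" "v \<le> m1 \<squnion> a" "w \<le> m2 \<squnion> a" by blast
  moreover have "m1 \<squnion> m2 \<in> M" using assms \<open>m1 \<in> M\<close> \<open>m2 \<in> M\<close> unfolding lattice_ideal_def by blast
  moreover have "m1 \<squnion> a \<le> (m1 \<squnion> m2) \<squnion> a" "m2 \<squnion> a \<le> (m1 \<squnion> m2) \<squnion> a"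
    by (simp_all add: le_supI1)
  ultimately show "v \<squnion> w \<in> {w. \<exists>m\<in>M. w \<le> m \<squnion> a}"
    by (blast intro: sup_least order_trans)
qed

lemma maximal_lattice_ideal_prime:
  assumes meet: "\<And>a b. a \<in> F \<Longrightarrow> b \<in> F \<Longrightarrow> a \<sqinter> b \<in> F" and "F \<noteq> {}"
    and M: "lattice_ideal M" "M \<inter> F = {}"
    and maximal: "\<And>J. lattice_ideal J \<Longrightarrow> J \<inter> F = {} \<Longrightarrow> M \<subseteq> J \<Longrightarrow> J = M"
  shows "prime_ideal M"
proof -
  have down: "\<And>a b. a \<in> M \<Longrightarrow> b \<le> a \<Longrightarrow> b \<in> M" and sup: "\<And>a b. a \<in> M \<Longrightarrow> b \<in> M \<Longrightarrow> a \<squnion> b \<in> M"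
    using M(1) unfolding lattice_ideal_def by blast+
  have meets_F: "\<exists>f\<in>F. \<exists>m\<in>M. f \<le> m \<squnion> a" if "a \<notin> M" for a
  proof (rule ccontr)
    let ?Ma = "{w. \<exists>m\<in>M. w \<le> m \<squnion> a}"
    assume "\<not> ?thesis"
    then have "?Ma \<inter> F = {}" by blast
    moreover have "M \<subseteq> ?Ma" by (blast intro: sup.cobounded1)
    ultimately have "?Ma = M" using maximal lattice_ideal_adjoin[OF M(1)] by blast
    moreover have "a \<in> ?Ma" using M(1) unfolding lattice_ideal_def by auto
    ultimately show False using that by blast
  qed
  have "a \<in> M \<or> b \<in> M" if ab: "a \<sqinter> b \<in> M" for a b
  proof (rule ccontr)
    assume "\<not> (a \<in> M \<or> b \<in> M)"
    then obtain f1 m1 f2 m2 where f: "f1 \<in> F" "m1 \<in> M" "f1 \<le> m1 \<squnion> a" "f2 \<in> F" "m2 \<in> M" "f2 \<le> m2 \<squnion> b"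
      using meets_F by blast
    have "m1 \<squnion> a \<le> (m1 \<squnion> m2) \<squnion> a" "m2 \<squnion> b \<le> (m1 \<squnion> m2) \<squnion> b"
      by (simp_all add: le_supI1)
    then have "f1 \<sqinter> f2 \<le> ((m1 \<squnion> m2) \<squnion> a) \<sqinter> ((m1 \<squnion> m2) \<squnion> b)"
      using f by (blast intro: inf_mono order_trans)
    also have "\<dots> = (m1 \<squnion> m2) \<squnion> (a \<sqinter> b)" by (rule sup_inf_distrib1[symmetric])
    finally have "f1 \<sqinter> f2 \<le> (m1 \<squnion> m2) \<squnion> (a \<sqinter> b)" .
    moreover have "(m1 \<squnion> m2) \<squnion> (a \<sqinter> b) \<in> M" using sup f(2,5) ab by blast
    ultimately have "f1 \<sqinter> f2 \<in> M" by (rule down[rotated])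
    then show False using meet f M(2) by blast
  qed
  moreover have "M \<noteq> UNIV" using \<open>F \<noteq> {}\<close> M(2) by blast
  moreover have "bot \<in> M" using M(1) unfolding lattice_ideal_def by blast
  ultimately show ?thesis
    unfolding prime_ideal_def using down sup by blast
qed

lemma exists_prime_ideal_avoiding:
  assumes meet: "\<And>a b. a \<in> F \<Longrightarrow> b \<in> F \<Longrightarrow> a \<sqinter> b \<in> F" and "bot \<notin> F" "F \<noteq> {}"
  shows "\<exists>J. prime_ideal J \<and> J \<inter> F = {}"
proof -
  let ?A = "{J. lattice_ideal J \<and> J \<inter> F = {}}"
  have "lattice_ideal {bot}"
    unfolding lattice_ideal_def by (simp add: bot_unique)
  then have "{bot} \<in> ?A" using \<open>bot \<notin> F\<close> by simp
  moreover have "\<Union>C \<in> ?A" if "C \<noteq> {}" "subset.chain ?A C" for C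
  proof -
    have CA: "\<And>J. J \<in> C \<Longrightarrow> lattice_ideal J \<and> J \<inter> F = {}"
      and total: "\<And>J K. J \<in> C \<Longrightarrow> K \<in> C \<Longrightarrow> J \<subseteq> K \<or> K \<subseteq> J"
      using that(2) unfolding subset_chain_def by blast+
    have "a \<squnion> b \<in> \<Union>C" if ab: "a \<in> J" "J \<in> C" "b \<in> K" "K \<in> C" for a b J K
    proof -
      from total[OF ab(2,4)] obtain L where "L \<in> C" "a \<in> L" "b \<in> L" using ab by blast
      then show ?thesis using CA[of L] unfolding lattice_ideal_def by blast
    qed
    moreover have "bot \<in> \<Union>C" using CA \<open>C \<noteq> {}\<close> unfolding lattice_ideal_def by blast
    moreover have "b \<in> \<Union>C" if "a \<in> J" "J \<in> C" "b \<le> a" for a b J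
      using that CA[of J] unfolding lattice_ideal_def by blast
    ultimately have "lattice_ideal (\<Union>C)"
      unfolding lattice_ideal_def by (intro conjI allI impI) blast+
    moreover have "\<Union>C \<inter> F = {}" using CA by blast
    ultimately show ?thesis by simp
  qed
  ultimately obtain M where M: "M \<in> ?A" and maximal: "\<forall>J\<in>?A. M \<subseteq> J \<longrightarrow> J = M"
    using subset_Zorn_nonempty[of ?A] by blast
  have "prime_ideal M"
    using maximal_lattice_ideal_prime[OF meet \<open>F \<noteq> {}\<close>] M maximal by simp
  then show ?thesis using M by blast
qed

section \<open>Pseudocomplemented lattices\<close>

locale pseudocomplemented =
  fixes pc :: "'a::{bounded_lattice,distrib_lattice} \<Rightarrow> 'a"
  assumes pseudocomplement: "is_pseudocomplement pc"
begin

lemma inf_eq_bot_iff_le_pc: "a \<sqinter> b = bot \<longleftrightarrow> b \<le> pc a"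
  using pseudocomplement unfolding is_pseudocomplement_def by blast

lemma le_pcI: "a \<sqinter> b = bot \<Longrightarrow> b \<le> pc a"
  by (simp add: inf_eq_bot_iff_le_pc)

lemma inf_pc [simp]: "a \<sqinter> pc a = bot"
  using inf_eq_bot_iff_le_pc by blast

lemma inf_pc_inf [simp]: "a \<sqinter> (pc a \<sqinter> b) = bot" "a \<sqinter> (b \<sqinter> pc a) = bot"
  by (simp add: inf_assoc[symmetric]) (subst inf_left_commute, simp)

lemma pc_antimono:
  assumes "a \<le> b" shows "pc b \<le> pc a"
proof (rule le_pcI)
  have "a \<sqinter> pc b \<le> b \<sqinter> pc b" using assms by (rule inf_mono) simp
  then show "a \<sqinter> pc b = bot" by (simp add: bot_unique)
qed

lemma le_pc_pc: "a \<le> pc (pc a)"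
  by (rule le_pcI) (subst inf_commute, simp)

lemma pc_pc_pc [simp]: "pc (pc (pc a)) = pc a"
  by (simp add: order.antisym le_pc_pc pc_antimono)

lemma pc_bot [simp]: "pc bot = top"
  using le_pcI[of bot top] by (simp add: top_le)

lemma pc_top [simp]: "pc top = bot"
  by (metis inf_pc inf_top_left)

lemma pc_sup: "pc (a \<squnion> b) = pc a \<sqinter> pc b"
proof (rule order.antisym)
  show "pc (a \<squnion> b) \<le> pc a \<sqinter> pc b" by (simp add: pc_antimono)
  show "pc a \<sqinter> pc b \<le> pc (a \<squnion> b)"
    by (rule le_pcI) (simp add: inf_sup_distrib2)
qed

lemma pc_pc_inf: "pc (pc (a \<sqinter> b)) = pc (pc a) \<sqinter> pc (pc b)"
proof (rule order.antisym)
  show "pc (pc (a \<sqinter> b)) \<le> pc (pc a) \<sqinter> pc (pc b)" by (simp add: pc_antimono)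
  have "b \<sqinter> (pc (a \<sqinter> b) \<sqinter> a) = (a \<sqinter> b) \<sqinter> pc (a \<sqinter> b)"
    by (simp only: inf_aci)
  then have 1: "pc (a \<sqinter> b) \<sqinter> a \<le> pc b"
    by (intro le_pcI) simp
  have "a \<sqinter> (pc (a \<sqinter> b) \<sqinter> pc (pc b)) = (pc (a \<sqinter> b) \<sqinter> a) \<sqinter> pc (pc b)"
    by (simp only: inf_aci)
  also have "\<dots> \<le> pc b \<sqinter> pc (pc b)" using 1 by (rule inf_mono) simp
  finally have 2: "pc (a \<sqinter> b) \<sqinter> pc (pc b) \<le> pc a"
    by (intro le_pcI) (simp add: bot_unique)
  have "pc (a \<sqinter> b) \<sqinter> (pc (pc a) \<sqinter> pc (pc b)) = (pc (a \<sqinter> b) \<sqinter> pc (pc b)) \<sqinter> pc (pc a)"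
    by (simp only: inf_aci)
  also have "\<dots> \<le> pc a \<sqinter> pc (pc a)" using 2 by (rule inf_mono) simp
  finally show "pc (pc a) \<sqinter> pc (pc b) \<le> pc (pc (a \<sqinter> b))"
    by (intro le_pcI) (simp add: bot_unique)
qed

lemma pc_inf: "pc (a \<sqinter> b) = pc (pc (pc a) \<sqinter> pc (pc b))"
  by (simp flip: pc_pc_inf)

lemma pc_inf_cong: "pc a = pc b \<Longrightarrow> pc c = pc d \<Longrightarrow> pc (a \<sqinter> c) = pc (b \<sqinter> d)"
  by (metis pc_inf)

lemma pc_mem_prime_ideal: "prime_ideal J \<Longrightarrow> a \<notin> J \<Longrightarrow> pc a \<in> J"
  using prime_ideal_inf_iff[of J a "pc a"] prime_ideal_bot[of J] by simp

lemma exists_prime_ideal_below_avoiding: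
  assumes I: "prime_ideal I" and "D \<noteq> {}"
    and directed: "\<And>d e. d \<in> D \<Longrightarrow> e \<in> D \<Longrightarrow> \<exists>f\<in>D. f \<le> d \<sqinter> e"
    and pc_mem: "\<And>d. d \<in> D \<Longrightarrow> pc d \<in> I"
  shows "\<exists>J. prime_ideal J \<and> J \<subseteq> I \<and> J \<inter> D = {}"
proof -
  \<comment> \<open>the filter generated by \<open>D\<close> and the complement of \<open>I\<close>\<close>
  define F where "F = {w. \<exists>d\<in>D. \<exists>c. c \<notin> I \<and> d \<sqinter> c \<le> w}"
  have "w \<sqinter> w' \<in> F" if w: "w \<in> F" "w' \<in> F" for w w'
  proof -
    obtain d c d' c' where "d \<in> D" "c \<notin> I" "d \<sqinter> c \<le> w" "d' \<in> D" "c' \<notin> I" "d' \<sqinter> c' \<le> w'"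
      using w unfolding F_def by blast
    moreover obtain f where "f \<in> D" "f \<le> d \<sqinter> d'" using directed \<open>d \<in> D\<close> \<open>d' \<in> D\<close> by blast
    moreover have "f \<sqinter> (c \<sqinter> c') \<le> d \<sqinter> c" "f \<sqinter> (c \<sqinter> c') \<le> d' \<sqinter> c'"
      using \<open>f \<le> d \<sqinter> d'\<close> by (simp_all add: le_infI1 le_infI2)
    ultimately have "f \<sqinter> (c \<sqinter> c') \<le> w \<sqinter> w'" "c \<sqinter> c' \<notin> I"
      using prime_ideal_inf_iff[OF I] by (meson le_inf_iff order_trans)+
    then show ?thesis unfolding F_def using \<open>f \<in> D\<close> by blast
  qed
  moreover have "bot \<notin> F"
  proof
    assume "bot \<in> F"
    then obtain d c where "d \<in> D" "c \<notin> I" "d \<sqinter> c = bot" unfolding F_def by (auto simp: bot_unique)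
    then show False using pc_mem le_pcI prime_ideal_down[OF I] by blast
  qed
  moreover have D_subset_F: "D \<subseteq> F"
    using prime_ideal_top[OF I] unfolding F_def by fastforce
  ultimately obtain J where J: "prime_ideal J" "J \<inter> F = {}"
    using exists_prime_ideal_avoiding[of F] \<open>D \<noteq> {}\<close> by blast
  have "J \<subseteq> I"
  proof
    fix w assume "w \<in> J"
    obtain d where "d \<in> D" using \<open>D \<noteq> {}\<close> by blast
    then have "w \<notin> I \<Longrightarrow> w \<in> F" unfolding F_def using inf_le2 by blast
    then show "w \<in> I" using J \<open>w \<in> J\<close> by blast
  qed
  then show ?thesis using J D_subset_F by blast
qed

end

section \<open>pm-algebras\<close>

locale pm_alg = pseudocomplemented pc for pc :: "'a::{bounded_lattice,distrib_lattice} \<Rightarrow> 'a" +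
  fixes dm :: "'a \<Rightarrow> 'a"
  assumes de_morgan: "is_de_morgan_inv dm"
begin

lemma dm_dm [simp]: "dm (dm a) = a"
  using de_morgan unfolding is_de_morgan_inv_def by blast

lemma dm_sup: "dm (a \<squnion> b) = dm a \<sqinter> dm b"
  using de_morgan unfolding is_de_morgan_inv_def by blast

lemma dm_inf: "dm (a \<sqinter> b) = dm a \<squnion> dm b"
proof -
  have "dm (a \<sqinter> b) = dm (dm (dm a \<squnion> dm b))" by (simp only: dm_sup dm_dm)
  then show ?thesis by simp
qed

lemma dm_antimono:
  assumes "a \<le> b" shows "dm b \<le> dm a"
proof -
  have "dm b = dm a \<sqinter> dm b" using assms by (simp flip: dm_sup add: sup.absorb2)
  then show ?thesis by (metis inf.cobounded1)
qed

lemma dm_top [simp]: "dm top = bot"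
  using dm_antimono[of "dm bot" top] by (simp add: bot_unique)

lemma dm_bot [simp]: "dm bot = top"
  using dm_dm[of top] by simp

end

lemma pm_alg_of_pm_algebra: "pm_algebra pc dm \<Longrightarrow> pm_alg pc dm"
  unfolding pm_algebra_def pm_alg_def pseudocomplemented_def pm_alg_axioms_def by blast

lemma pstar_iter_0 [simp]: "pstar_iter pc dm 0 a = a"
  by (simp add: pstar_iter_def)

lemma pstar_iter_Suc: "pstar_iter pc dm (Suc k) a = pc (dm (pstar_iter pc dm k a))"
  by (simp add: pstar_iter_def)

lemma pstar_iter_Suc_right: "pstar_iter pc dm (Suc k) a = pstar_iter pc dm k (pc (dm a))"
  by (simp add: pstar_iter_def funpow_swap1)

context pm_alg
begin

lemma pstar_iter_inf: "pstar_iter pc dm k (a \<sqinter> b) = pstar_iter pc dm k a \<sqinter> pstar_iter pc dm k b"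
  by (induction k) (simp_all add: pstar_iter_Suc dm_inf pc_sup)

lemma mono_pstar_iter: "mono (pstar_iter pc dm k)"
  by (rule monoI, induction k) (simp_all add: pstar_iter_Suc dm_antimono pc_antimono)

lemma pstar_identity_imp_le:
  assumes "\<forall>a. pstar_iter pc dm m (a \<sqinter> pc (dm a)) = pstar_iter pc dm (Suc m) (a \<sqinter> pc (dm a))"
  shows "pstar_iter pc dm m a \<sqinter> pstar_iter pc dm (Suc m) a \<le> pstar_iter pc dm (Suc (Suc m)) a"
proof -
  have "pstar_iter pc dm m a \<sqinter> pstar_iter pc dm (Suc m) a = pstar_iter pc dm m (a \<sqinter> pc (dm a))"
    by (simp only: pstar_iter_inf pstar_iter_Suc_right)
  also have "\<dots> = pstar_iter pc dm (Suc m) (a \<sqinter> pc (dm a))" using assms by blast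
  also have "\<dots> = pstar_iter pc dm (Suc m) a \<sqinter> pstar_iter pc dm (Suc (Suc m)) a"
    by (simp only: pstar_iter_inf pstar_iter_Suc_right[where k="Suc m"])
  finally show ?thesis by (metis inf.cobounded2)
qed

lemma mem_zeta_iff [simp]: "a \<in> zeta dm I \<longleftrightarrow> dm a \<notin> I"
  by (simp add: zeta_def)

lemma zeta_zeta [simp]: "zeta dm (zeta dm I) = I"
  by (auto simp: zeta_def)

lemma zeta_subset_iff [simp]: "zeta dm I \<subseteq> zeta dm J \<longleftrightarrow> J \<subseteq> I"
proof
  assume "zeta dm I \<subseteq> zeta dm J"
  then show "J \<subseteq> I" using mem_zeta_iff[of "dm _"] by (auto simp del: mem_zeta_iff)
qed auto

lemma zeta_eq_iff [simp]: "zeta dm I = zeta dm J \<longleftrightarrow> I = J"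
  by (metis zeta_zeta)

lemma zeta_funpow: "(zeta dm ^^ k) I = (if even k then I else zeta dm I)"
  by (induction k) auto

lemma prime_ideal_zeta:
  assumes I: "prime_ideal I" shows "prime_ideal (zeta dm I)"
  unfolding prime_ideal_def
proof (intro conjI allI impI)
  have "bot \<in> zeta dm I" "top \<notin> zeta dm I"
    using prime_ideal_top[OF I] prime_ideal_bot[OF I] by simp_all
  then show "zeta dm I \<noteq> {}" "zeta dm I \<noteq> UNIV" by blast+
  show "b \<in> zeta dm I" if "a \<in> zeta dm I" "b \<le> a" for a b
    using that prime_ideal_down[OF I] dm_antimono by auto
  show "a \<squnion> b \<in> zeta dm I" if "a \<in> zeta dm I" "b \<in> zeta dm I" for a b
    using that prime_ideal_inf_iff[OF I] by (simp add: dm_sup)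
  show "a \<in> zeta dm I \<or> b \<in> zeta dm I" if "a \<sqinter> b \<in> zeta dm I" for a b
    using that prime_ideal_sup_iff[OF I] by (simp add: dm_inf)
qed

lemma zeta_in_dual_space_iff [simp]: "zeta dm I \<in> dual_space \<longleftrightarrow> I \<in> dual_space"
  unfolding dual_space_def using prime_ideal_zeta[of I] prime_ideal_zeta[of "zeta dm I"] by auto

lemma pc_dm_mem_of_mem_zeta: "prime_ideal J \<Longrightarrow> J \<subseteq> I \<Longrightarrow> a \<in> zeta dm J \<Longrightarrow> pc (dm a) \<in> I"
  using pc_mem_prime_ideal by auto

lemma pstar_iter_across_valley:
  assumes "prime_ideal J" "prime_ideal M" "J \<subseteq> I" "J \<subseteq> M" "pstar_iter pc dm k a \<in> M"
  shows "pstar_iter pc dm (k + 2) a \<in> I"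
proof -
  have "pstar_iter pc dm (Suc k) a \<in> zeta dm J"
    using pc_dm_mem_of_mem_zeta[OF prime_ideal_zeta[OF assms(2)], of "zeta dm J"] assms(4,5)
    by (simp add: pstar_iter_Suc)
  then show ?thesis
    using pc_dm_mem_of_mem_zeta[OF assms(1,3)] by (simp add: pstar_iter_Suc)
qed

definition pc_kernel :: "'a \<Rightarrow> 'a \<Rightarrow> bool" where
  "pc_kernel a b \<longleftrightarrow> pc a = pc b \<and> pc (dm a) = pc (dm b)"

lemma pm_congruence_pc_kernel: "pm_congruence pc dm pc_kernel"
  unfolding pm_congruence_def
proof (intro conjI allI impI)
  show "equivp pc_kernel"
    by (rule equivpI) (auto simp: pc_kernel_def reflp_def symp_def transp_def)
  show "pc_kernel (a \<sqinter> c) (b \<sqinter> d)" "pc_kernel (a \<squnion> c) (b \<squnion> d)"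
    if "pc_kernel a b" "pc_kernel c d" for a b c d
    using that pc_inf_cong[of "dm a" "dm b" "dm c" "dm d"] pc_inf_cong[of a b c d]
    unfolding pc_kernel_def by (simp_all add: pc_sup dm_inf dm_sup)
  show "pc_kernel (pc a) (pc b)" "pc_kernel (dm a) (dm b)" if "pc_kernel a b" for a b
    using that unfolding pc_kernel_def by simp_all
qed

lemma pm_congruence_eq: "pm_congruence pc dm (=)"
  unfolding pm_congruence_def by (simp add: identity_equivp)

lemma pc_kernel_top_iff: "pc_kernel top b \<longleftrightarrow> b = top"
proof
  assume "pc_kernel top b"
  then have "pc (dm b) = top" unfolding pc_kernel_def by simp
  then have "dm b = bot" using inf_eq_bot_iff_le_pc[of "dm b" top] by simp
  then show "b = top" using dm_dm[of b] by simp
qed (simp add: pc_kernel_def)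

lemma regular_pc_kernel_eq:
  assumes "pm_regular pc dm" "pc a = pc b" "pc (dm a) = pc (dm b)"
  shows "a = b"
proof -
  have "{b. pc_kernel top b} = {b. top = b}" using pc_kernel_top_iff by auto
  then have "pc_kernel = (=)"
    using assms(1) pm_congruence_pc_kernel pm_congruence_eq unfolding pm_regular_def by blast
  then show ?thesis using assms(2,3) by (metis pc_kernel_def)
qed

lemma regular_le_sup_pc:
  assumes "pm_regular pc dm"
  shows "a \<sqinter> dm (pc (dm a)) \<le> b \<squnion> pc b"
proof -
  let ?d = "a \<sqinter> dm (pc (dm a))" and ?b = "b \<squnion> pc b"
  have "pc (dm ?d) = bot" by (simp add: dm_inf pc_sup)
  have "pc (?b \<squnion> ?d) = pc ?b" by (simp add: pc_sup)
  moreover have "pc (dm (?b \<squnion> ?d)) = pc (pc (pc (dm ?b)) \<sqinter> pc (pc (dm ?d)))"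
    by (simp only: dm_sup, rule pc_inf)
  then have "pc (dm (?b \<squnion> ?d)) = pc (dm ?b)"
    using \<open>pc (dm ?d) = bot\<close> by simp
  ultimately have "?b \<squnion> ?d = ?b" by (rule regular_pc_kernel_eq[OF assms])
  then show ?thesis by (simp add: sup.absorb_iff1)
qed

end

section \<open>Paths in the comparability graph\<close>

definition comp_walk :: "'b set set \<Rightarrow> (nat \<Rightarrow> 'b set) \<Rightarrow> nat \<Rightarrow> bool" where
  "comp_walk P p k \<longleftrightarrow> (\<forall>i\<le>k. p i \<in> P)
     \<and> (\<forall>i<k. p i \<noteq> p (Suc i) \<and> (p i \<subseteq> p (Suc i) \<or> p (Suc i) \<subseteq> p i))"

lemma comp_path_iff_walk: "comp_path P x y k \<longleftrightarrow> (\<exists>p. p 0 = x \<and> p k = y \<and> comp_walk P p k)"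
  unfolding comp_path_def comp_walk_def by blast

lemma comp_walkD:
  assumes "comp_walk P p k" "i < k"
  shows "p i \<in> P" "p (Suc i) \<in> P" "p i \<noteq> p (Suc i)" "p i \<subseteq> p (Suc i) \<or> p (Suc i) \<subseteq> p i"
  using assms unfolding comp_walk_def by auto

lemma comp_path_Cons:
  assumes "x \<in> P" "x \<noteq> y" "x \<subseteq> y \<or> y \<subseteq> x" "comp_path P y z k"
  shows "comp_path P x z (Suc k)"
proof -
  obtain p where p: "p 0 = y" "p k = z" "comp_walk P p k"
    using assms(4) unfolding comp_path_iff_walk by blast
  define q where "q i = (case i of 0 \<Rightarrow> x | Suc j \<Rightarrow> p j)" for i
  have "comp_walk P q (Suc k)"
    using p(1,3) assms(1-3) unfolding comp_walk_def q_def by (auto split: nat.split)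
  moreover have "q 0 = x" "q (Suc k) = z" using p(2) unfolding q_def by simp_all
  ultimately show ?thesis unfolding comp_path_iff_walk by blast
qed

definition comp_path_le :: "'b set set \<Rightarrow> 'b set \<Rightarrow> 'b set \<Rightarrow> nat \<Rightarrow> bool" where
  "comp_path_le P x y m \<longleftrightarrow> (\<exists>k\<le>m. comp_path P x y k)"

lemma comp_path_le_refl: "x \<in> P \<Longrightarrow> comp_path_le P x x 0"
  unfolding comp_path_le_def comp_path_def by auto

lemma comp_path_le_Cons:
  assumes "x \<in> P" "x \<subseteq> y" "comp_path_le P y z m"
  shows "comp_path_le P x z (Suc m)"
proof -
  obtain k where "k \<le> m" "comp_path P y z k" using assms(3) unfolding comp_path_le_def by blast
  then show ?thesis
    using comp_path_Cons[OF assms(1) _ _ \<open>comp_path P y z k\<close>] assms(2)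
    unfolding comp_path_le_def by (cases "x = y") (auto intro: le_SucI)
qed

lemma comp_dist_eq_enatD:
  assumes "comp_dist P x y = enat n"
  shows "comp_path P x y n" "k < n \<Longrightarrow> \<not> comp_path P x y k"
proof -
  have ex: "\<exists>k. comp_path P x y k" using assms unfolding comp_dist_def by (auto split: if_splits)
  then have "(LEAST k. comp_path P x y k) = n" using assms unfolding comp_dist_def by simp
  then show "comp_path P x y n" "k < n \<Longrightarrow> \<not> comp_path P x y k"
    using LeastI_ex[OF ex] not_less_Least by metis+
qed

lemma comp_dist_ge_enatD:
  assumes "enat n \<le> comp_dist P x y" "k < n"
  shows "\<not> comp_path P x y k"
proof
  assume "comp_path P x y k"
  then have "comp_dist P x y \<le> enat k" unfolding comp_dist_def by (auto intro: Least_le)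
  then show False using assms by (metis enat_ord_simps(2) leD order_trans)
qed

definition minimal_in :: "'b set set \<Rightarrow> 'b set \<Rightarrow> bool" where
  "minimal_in P J \<longleftrightarrow> J \<in> P \<and> (\<forall>K\<in>P. K \<subseteq> J \<longrightarrow> K = J)"

definition height_le_one :: "'b set set \<Rightarrow> bool" where
  "height_le_one P \<longleftrightarrow> (\<forall>I\<in>P. \<forall>J\<in>P. \<forall>K\<in>P. \<not> (I \<subset> J \<and> J \<subset> K))"

lemma height_le_oneD: "height_le_one P \<Longrightarrow> a \<in> P \<Longrightarrow> b \<in> P \<Longrightarrow> c \<in> P \<Longrightarrow> a \<subset> b \<Longrightarrow> \<not> b \<subset> c"
  unfolding height_le_one_def by blast

lemma minimal_in_neighbour_le:
  "minimal_in P a \<Longrightarrow> b \<in> P \<Longrightarrow> a \<noteq> b \<Longrightarrow> a \<subseteq> b \<or> b \<subseteq> a \<Longrightarrow> a \<subseteq> b"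
  unfolding minimal_in_def by blast

lemma height_le_one_minimal_below:
  assumes h: "height_le_one P" and "a \<in> P" "b \<in> P" "\<not> minimal_in P a" "a \<noteq> b" "b \<subseteq> a \<or> a \<subseteq> b"
  shows "b \<subseteq> a \<and> minimal_in P b"
proof -
  obtain c where c: "c \<in> P" "c \<subset> a" using assms(2,4) unfolding minimal_in_def by blast
  have "\<not> a \<subset> b" using h c assms(2,3) unfolding height_le_one_def by blast
  then have ba: "b \<subset> a" using assms(5,6) by blast
  have "d = b" if "d \<in> P" "d \<subseteq> b" for d
    using h that ba assms(2,3) unfolding height_le_one_def by blast
  then show ?thesis using ba assms(3) unfolding minimal_in_def by blast
qed

lemma walk_minimal_iff_even:
  assumes "height_le_one P" "comp_walk P p k" "minimal_in P (p 0)"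
  shows "i \<le> k \<Longrightarrow> minimal_in P (p i) \<longleftrightarrow> even i"
proof (induction i)
  case 0
  then show ?case using assms(3) by simp
next
  case (Suc i)
  then have IH: "minimal_in P (p i) \<longleftrightarrow> even i" by simp
  have step: "p i \<in> P" "p (Suc i) \<in> P" "p i \<noteq> p (Suc i)" "p i \<subseteq> p (Suc i) \<or> p (Suc i) \<subseteq> p i"
    using comp_walkD[OF assms(2)] Suc.prems by simp_all
  show ?case
  proof (cases "even i")
    case True
    then have "p i \<subseteq> p (Suc i)" using IH step minimal_in_neighbour_le by blast
    then have "\<not> minimal_in P (p (Suc i))" using step(1,3) unfolding minimal_in_def by blast
    then show ?thesis using True by simp
  next
    case False
    then have "minimal_in P (p (Suc i))"
      using IH step height_le_one_minimal_below[OF assms(1) step(1,2)] by blast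
    then show ?thesis using False by simp
  qed
qed

lemma walk_step_direction:
  assumes "height_le_one P" "comp_walk P p k" "minimal_in P (p 0)" "i < k"
  shows "if even i then p i \<subseteq> p (Suc i) else p (Suc i) \<subseteq> p i"
proof -
  have min: "minimal_in P (p i) \<longleftrightarrow> even i" "minimal_in P (p (Suc i)) \<longleftrightarrow> odd i"
    using walk_minimal_iff_even[OF assms(1-3)] assms(4) by simp_all
  note step = comp_walkD[OF assms(2,4)]
  show ?thesis
  proof (cases "even i")
    case True
    then have "p i \<subseteq> p (Suc i)" using min(1) step minimal_in_neighbour_le by blast
    then show ?thesis using True by simp
  next
    case False
    then have "p (Suc i) \<subseteq> p i"
      using min(2) step minimal_in_neighbour_le[of P "p (Suc i)" "p i"] by blast
    then show ?thesis using False by simp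
  qed
qed

section \<open>The dual pm-space of a regular pm-algebra\<close>

context pm_alg
begin

lemma regular_height_le_one:
  assumes "pm_regular pc dm"
  shows "height_le_one (dual_space :: 'a set set)"
  unfolding height_le_one_def
proof (intro ballI notI)
  fix I J K :: "'a set"
  assume "I \<in> dual_space" "J \<in> dual_space" "K \<in> dual_space" and chain: "I \<subset> J \<and> J \<subset> K"
  then have I: "prime_ideal I" and J: "prime_ideal J" and K: "prime_ideal K"
    unfolding dual_space_def by simp_all
  obtain b where b: "b \<in> J" "b \<notin> I" using chain by blast
  obtain a where a: "a \<in> K" "a \<notin> J" using chain by blast
  have "pc b \<in> J" using pc_mem_prime_ideal[OF I b(2)] chain by blast
  then have "b \<squnion> pc b \<in> J" using b(1) prime_ideal_sup_iff[OF J] by simp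
  then have "a \<sqinter> dm (pc (dm a)) \<in> J" by (rule prime_ideal_down[OF J _ regular_le_sup_pc[OF assms]])
  moreover have "dm (pc (dm a)) \<notin> J"
  proof
    assume "dm (pc (dm a)) \<in> J"
    then have "a \<squnion> dm (pc (dm a)) \<in> K" using a(1) chain prime_ideal_sup_iff[OF K] by blast
    moreover have "a \<squnion> dm (pc (dm a)) = dm (dm a \<sqinter> pc (dm a))" by (simp only: dm_inf dm_dm)
    ultimately show False using prime_ideal_top[OF K] by simp
  qed
  ultimately show False using a(2) prime_ideal_inf_iff[OF J] by blast
qed

lemma comp_path_zeta:
  assumes "comp_path dual_space x y k"
  shows "comp_path dual_space (zeta dm x) (zeta dm y) k"
proof -
  obtain p where p: "p 0 = x" "p k = y" "comp_walk dual_space p k"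
    using assms unfolding comp_path_iff_walk by blast
  have "comp_walk dual_space (\<lambda>i. zeta dm (p i)) k"
    using p(3) unfolding comp_walk_def by (simp, blast)
  then show ?thesis
    unfolding comp_path_iff_walk using p by (intro exI[of _ "\<lambda>i. zeta dm (p i)"]) simp
qed

lemma comp_path_zeta_iff:
  "comp_path dual_space (zeta dm x) (zeta dm y) k \<longleftrightarrow> comp_path dual_space x y k"
  using comp_path_zeta[of x y k] comp_path_zeta[of "zeta dm x" "zeta dm y" k] by (simp only: zeta_zeta) blast

lemma comp_path_le_zeta:
  "comp_path_le dual_space x y m \<Longrightarrow> comp_path_le dual_space (zeta dm x) (zeta dm y) m"
  unfolding comp_path_le_def using comp_path_zeta by blast

lemma minimal_zeta_iff:
  assumes h: "height_le_one (dual_space :: 'a set set)" and t: "t \<in> dual_space"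
    and s: "s \<in> dual_space" "s \<noteq> t" "s \<subseteq> t \<or> t \<subseteq> s"
  shows "minimal_in dual_space (zeta dm t) \<longleftrightarrow> \<not> minimal_in dual_space t"
proof
  assume min: "minimal_in dual_space (zeta dm t)"
  show "\<not> minimal_in dual_space t"
  proof
    assume "minimal_in dual_space t"
    then have "t \<subseteq> s" using s minimal_in_neighbour_le[of _ t s] by blast
    then have "zeta dm s \<subseteq> zeta dm t" "zeta dm s \<noteq> zeta dm t" "zeta dm s \<in> dual_space"
      using s by simp_all
    then show False using min unfolding minimal_in_def by blast
  qed
next
  assume "\<not> minimal_in dual_space t"
  then obtain r where r: "r \<in> dual_space" "r \<subset> t"
    using t unfolding minimal_in_def by blast
  show "minimal_in dual_space (zeta dm t)"
    unfolding minimal_in_def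
  proof (intro conjI ballI impI)
    show "zeta dm t \<in> dual_space" using t by simp
    fix u assume u: "u \<in> dual_space" "u \<subseteq> zeta dm t"
    show "u = zeta dm t"
    proof (rule ccontr)
      assume "u \<noteq> zeta dm t"
      then have "t \<subset> zeta dm u"
        using u(2) zeta_subset_iff[of "zeta dm t" u] zeta_zeta[of u] by auto
      moreover have "zeta dm u \<in> dual_space" using u(1) by simp
      ultimately show False using height_le_oneD[OF h r(1) t] r(2) by blast
    qed
  qed
qed

lemma zeta_dist_enatE:
  assumes "y \<in> dual_space" "zeta_dist dm x y = enat n"
  obtains t where "t \<in> dual_space" "comp_path dual_space x t n"
    "\<And>k. k < n \<Longrightarrow> \<not> comp_path dual_space x t k \<and> \<not> comp_path dual_space x (zeta dm t) k"
proof (cases "comp_dist dual_space x y \<le> comp_dist dual_space x (zeta dm y)")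
  case True
  then have "comp_dist dual_space x y = enat n" "enat n \<le> comp_dist dual_space x (zeta dm y)"
    using assms(2) unfolding zeta_dist_def by (simp_all add: min_def)
  then show ?thesis
    using that[of y] assms(1) comp_dist_eq_enatD comp_dist_ge_enatD by blast
next
  case False
  then have eq: "comp_dist dual_space x (zeta dm y) = enat n" and ge: "enat n \<le> comp_dist dual_space x y"
    using assms(2) unfolding zeta_dist_def by (simp_all add: min_def)
  show ?thesis
  proof (rule that[of "zeta dm y"])
    show "zeta dm y \<in> dual_space" using assms(1) by simp
    show "comp_path dual_space x (zeta dm y) n" using comp_dist_eq_enatD(1)[OF eq] .
    show "\<not> comp_path dual_space x (zeta dm y) k \<and> \<not> comp_path dual_space x (zeta dm (zeta dm y)) k"
      if "k < n" for k
      using comp_dist_eq_enatD(2)[OF eq that] comp_dist_ge_enatD[OF ge that] by simp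
  qed
qed

lemma zeta_dist_minimal_witness:
  assumes h: "height_le_one (dual_space :: 'a set set)"
    and "x \<in> dual_space" "y \<in> dual_space" "zeta_dist dm x y = enat n"
  obtains u t where "minimal_in dual_space u" "comp_path dual_space u t n"
    "\<And>k. k < n \<Longrightarrow> \<not> comp_path dual_space u t k \<and> \<not> comp_path dual_space u (zeta dm t) k"
proof -
  obtain t where t: "t \<in> dual_space" "comp_path dual_space x t n"
    and short: "\<And>k. k < n \<Longrightarrow> \<not> comp_path dual_space x t k \<and> \<not> comp_path dual_space x (zeta dm t) k"
    using zeta_dist_enatE[OF assms(3,4)] by blast
  show ?thesis
  proof (cases "minimal_in dual_space x")
    case True
    then show ?thesis using that t short by blast
  next
    case False
    then obtain r where "r \<in> dual_space" "r \<subset> x"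
      using assms(2) unfolding minimal_in_def by blast
    then have "minimal_in dual_space (zeta dm x)"
      using minimal_zeta_iff[OF h assms(2)] False by blast
    moreover have "comp_path dual_space (zeta dm x) (zeta dm t) n"
      using comp_path_zeta[OF t(2)] .
    moreover have "\<not> comp_path dual_space (zeta dm x) (zeta dm t) k
        \<and> \<not> comp_path dual_space (zeta dm x) (zeta dm (zeta dm t)) k" if "k < n" for k
      using short[OF that] comp_path_zeta_iff[of x t k] comp_path_zeta_iff[of x "zeta dm t" k] by simp
    ultimately show ?thesis by (rule that)
  qed
qed

lemma equal_length_paths_to_zeta_absurd:
  assumes h: "height_le_one (dual_space :: 'a set set)" and "minimal_in dual_space u" "1 \<le> n"
    and "comp_path dual_space u t n" "comp_path dual_space u (zeta dm t) n"
  shows False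
proof -
  obtain p where p: "p 0 = u" "p n = t" "comp_walk dual_space p n"
    using assms(4) unfolding comp_path_iff_walk by blast
  obtain q where q: "q 0 = u" "q n = zeta dm t" "comp_walk dual_space q n"
    using assms(5) unfolding comp_path_iff_walk by blast
  have "minimal_in dual_space t \<longleftrightarrow> even n"
    using walk_minimal_iff_even[OF h p(3), of n] p(1,2) assms(2) by simp
  moreover have "minimal_in dual_space (zeta dm t) \<longleftrightarrow> even n"
    using walk_minimal_iff_even[OF h q(3), of n] q(1,2) assms(2) by simp
  moreover have "minimal_in dual_space (zeta dm t) \<longleftrightarrow> \<not> minimal_in dual_space t"
    using comp_walkD[OF p(3), of "n - 1"] assms(3) p(2) minimal_zeta_iff[OF h, of t "p (n - 1)"]
    by (simp add: disj_commute)
  ultimately show False by simp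
qed

lemma comp_path_le_of_pstar_iter_mem:
  assumes Z: "prime_ideal Z"
  shows "prime_ideal I \<Longrightarrow> (\<And>a. a \<in> Z \<Longrightarrow> pstar_iter pc dm m a \<in> I) \<Longrightarrow>
    \<exists>K. prime_ideal K \<and> K \<subseteq> I \<and> comp_path_le dual_space K ((zeta dm ^^ m) Z) m"
proof (induction m arbitrary: I)
  case 0
  then have "Z \<subseteq> I" by auto
  moreover have "comp_path_le dual_space Z Z 0"
    using Z comp_path_le_refl unfolding dual_space_def by blast
  ultimately show ?case using Z by auto
next
  case (Suc m)
  let ?D = "(\<lambda>a. dm (pstar_iter pc dm m a)) ` Z"
  have "\<exists>J. prime_ideal J \<and> J \<subseteq> I \<and> J \<inter> ?D = {}"
  proof (rule exists_prime_ideal_below_avoiding[OF Suc.prems(1)])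
    show "?D \<noteq> {}" using prime_ideal_bot[OF Z] by blast
    show "\<exists>f\<in>?D. f \<le> d \<sqinter> e" if de: "d \<in> ?D" "e \<in> ?D" for d e
    proof -
      obtain a b where ab: "a \<in> Z" "b \<in> Z" "d = dm (pstar_iter pc dm m a)" "e = dm (pstar_iter pc dm m b)"
        using de by blast
      have "pstar_iter pc dm m a \<le> pstar_iter pc dm m (a \<squnion> b)" "pstar_iter pc dm m b \<le> pstar_iter pc dm m (a \<squnion> b)"
        using mono_pstar_iter by (simp_all add: monoD)
      then have "dm (pstar_iter pc dm m (a \<squnion> b)) \<le> d \<sqinter> e"
        using ab(3,4) dm_antimono by simp
      moreover have "a \<squnion> b \<in> Z" using ab(1,2) prime_ideal_sup_iff[OF Z] by simp
      ultimately show ?thesis by blast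
    qed
    show "pc d \<in> I" if "d \<in> ?D" for d
      using that Suc.prems(2) by (auto simp: pstar_iter_Suc)
  qed
  then obtain J where J: "prime_ideal J" "J \<subseteq> I" "\<And>a. a \<in> Z \<Longrightarrow> pstar_iter pc dm m a \<in> zeta dm J"
    by auto
  obtain K where K: "prime_ideal K" "K \<subseteq> zeta dm J" "comp_path_le dual_space K ((zeta dm ^^ m) Z) m"
    using Suc.IH[OF prime_ideal_zeta[OF J(1)] J(3)] by blast
  have "J \<subseteq> zeta dm K" using K(2) zeta_subset_iff[of "zeta dm J" K] by simp
  then have "comp_path_le dual_space J ((zeta dm ^^ Suc m) Z) (Suc m)"
    using comp_path_le_Cons[OF _ _ comp_path_le_zeta[OF K(3)]] J(1) unfolding dual_space_def by simp
  then show ?case using J(1,2) by blast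
qed

lemma pstar_iter_walk_back:
  assumes h: "height_le_one (dual_space :: 'a set set)"
    and walk: "comp_walk dual_space p k" and min: "minimal_in dual_space (p 0)"
  shows "2 * j + 1 \<le> k \<Longrightarrow> pstar_iter pc dm l a \<in> p (2 * j + 1) \<Longrightarrow>
    pstar_iter pc dm (l + 2 * j + 2) a \<in> p 0"
proof (induction j arbitrary: l)
  case 0
  have "p 0 \<subseteq> p 1" using walk_step_direction[OF h walk min, of 0] 0 by simp
  moreover have "prime_ideal (p 0)" "prime_ideal (p 1)"
    using comp_walkD(1,2)[OF walk, of 0] 0 unfolding dual_space_def by simp_all
  ultimately show ?case using pstar_iter_across_valley[of "p 0" "p 1" "p 0"] 0 by simp
next
  case (Suc j)
  let ?i = "2 * j + 1"
  have "p (Suc ?i) \<subseteq> p ?i" "p (Suc ?i) \<subseteq> p (Suc (Suc ?i))"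
    using walk_step_direction[OF h walk min, of ?i] walk_step_direction[OF h walk min, of "Suc ?i"]
      Suc.prems(1) by simp_all
  moreover have "prime_ideal (p ?i)" "prime_ideal (p (Suc ?i))" "prime_ideal (p (Suc (Suc ?i)))"
    using comp_walkD(1,2)[OF walk, of ?i] comp_walkD(2)[OF walk, of "Suc ?i"] Suc.prems(1)
    unfolding dual_space_def by simp_all
  ultimately have "pstar_iter pc dm (l + 2) a \<in> p ?i"
    using pstar_iter_across_valley[of "p (Suc ?i)" "p (Suc (Suc ?i))" "p ?i"] Suc.prems(2) by simp
  then have "pstar_iter pc dm (l + 2 + 2 * j + 2) a \<in> p 0"
    using Suc.IH[of "l + 2"] Suc.prems(1) by simp
  then show ?case by (simp add: algebra_simps)
qed

lemma pstar_iter_Suc_mem_of_walk: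
  assumes h: "height_le_one (dual_space :: 'a set set)"
    and walk: "comp_walk dual_space p n" and min: "minimal_in dual_space (p 0)" and "1 \<le> n"
    and a: "a \<in> (zeta dm ^^ Suc n) (p n)"
  shows "pstar_iter pc dm (Suc n) a \<in> p 0"
proof (cases "odd n")
  case True
  then obtain j where j: "n = 2 * j + 1" by (rule oddE)
  have "pstar_iter pc dm 0 a \<in> p (2 * j + 1)" using a j by (simp add: zeta_funpow)
  then show ?thesis using pstar_iter_walk_back[OF h walk min, of j 0 a] j by simp
next
  case False
  then obtain m where "n = 2 * m" by (auto elim: evenE)
  then have "n = 2 * (m - 1) + 2" using \<open>1 \<le> n\<close> by simp
  then obtain j where j: "n = 2 * j + 2" by blast
  have "p n \<subseteq> p (2 * j + 1)"
    using walk_step_direction[OF h walk min, of "2 * j + 1"] j by simp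
  moreover have "prime_ideal (p n)" using comp_walkD(2)[OF walk, of "2 * j + 1"] j
    unfolding dual_space_def by simp
  ultimately have "pstar_iter pc dm 1 a \<in> p (2 * j + 1)"
    using pc_dm_mem_of_mem_zeta a False by (simp add: zeta_funpow pstar_iter_Suc)
  then show ?thesis using pstar_iter_walk_back[OF h walk min, of j 1 a] j by simp
qed

lemma shortest_path_from_minimal_absurd:
  assumes h: "height_le_one (dual_space :: 'a set set)" and "1 \<le> n"
    and le: "\<And>a. pstar_iter pc dm (n - 1) a \<sqinter> pstar_iter pc dm n a \<le> pstar_iter pc dm (Suc n) a"
    and u: "minimal_in dual_space u" and path: "comp_path dual_space u t n"
    and short: "\<And>k. k < n \<Longrightarrow> \<not> comp_path dual_space u t k \<and> \<not> comp_path dual_space u (zeta dm t) k"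
  shows False
proof -
  obtain p where p: "p 0 = u" "p n = t" "comp_walk dual_space p n"
    using path unfolding comp_path_iff_walk by blast
  have U: "prime_ideal u" and "prime_ideal t"
    using u comp_walkD(2)[OF p(3), of "n - 1"] p(2) \<open>1 \<le> n\<close> unfolding minimal_in_def dual_space_def by auto
  define Z where "Z = (zeta dm ^^ Suc n) t"
  have Z: "prime_ideal Z"
    unfolding Z_def zeta_funpow using \<open>prime_ideal t\<close> prime_ideal_zeta by simp
  have Zt: "(zeta dm ^^ (n - 1)) Z = t" "(zeta dm ^^ n) Z = zeta dm t"
    unfolding Z_def zeta_funpow using \<open>1 \<le> n\<close> by (simp_all add: even_diff_nat)
  have "pstar_iter pc dm (Suc n) a \<in> u" if "a \<in> Z" for a
    using pstar_iter_Suc_mem_of_walk[OF h p(3)] that p(1,2) u \<open>1 \<le> n\<close> unfolding Z_def by simp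
  then have "pstar_iter pc dm (n - 1) a \<sqinter> pstar_iter pc dm n a \<in> u" if "a \<in> Z" for a
    using that le prime_ideal_down[OF U] by blast
  then consider "\<And>a. a \<in> Z \<Longrightarrow> pstar_iter pc dm (n - 1) a \<in> u"
    | "\<And>a. a \<in> Z \<Longrightarrow> pstar_iter pc dm n a \<in> u"
    using prime_ideal_inf_image_cases[OF U Z mono_pstar_iter mono_pstar_iter] by blast
  moreover have below_u: "K = u" if "prime_ideal K" "K \<subseteq> u" for K
    using u that unfolding minimal_in_def dual_space_def by blast
  ultimately show False
  proof cases
    case 1
    then have "comp_path_le dual_space u t (n - 1)"
      using comp_path_le_of_pstar_iter_mem[OF Z U 1, unfolded Zt(1)] below_u by blast
    then show False using short \<open>1 \<le> n\<close> unfolding comp_path_le_def by fastforce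
  next
    case 2
    then have "comp_path_le dual_space u (zeta dm t) n"
      using comp_path_le_of_pstar_iter_mem[OF Z U 2, unfolded Zt(2)] below_u by blast
    then have "comp_path dual_space u (zeta dm t) n"
      using short unfolding comp_path_le_def by (metis le_neq_implies_less)
    then show False using equal_length_paths_to_zeta_absurd[OF h u \<open>1 \<le> n\<close> path] by blast
  qed
qed

end

theorem theorem3p7:
  fixes pc dm :: "'a::{bounded_lattice,distrib_lattice} \<Rightarrow> 'a"
    and x y :: "'a set" and n :: nat
  assumes "pm_algebra pc dm"
    and "pm_regular pc dm"
    and "x \<in> dual_space" and "y \<in> dual_space"
    and "1 \<le> n"
    and "zeta_dist dm x y = enat n"
  shows "\<not> (\<forall>a. pstar_iter pc dm (n - 1) (inf a (pc (dm a))) = pstar_iter pc dm n (inf a (pc (dm a))))"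
proof
  assume identity: "\<forall>a. pstar_iter pc dm (n - 1) (inf a (pc (dm a))) = pstar_iter pc dm n (inf a (pc (dm a)))"
  interpret pm_alg pc dm by (rule pm_alg_of_pm_algebra[OF assms(1)])
  have height: "height_le_one (dual_space :: 'a set set)"
    by (rule regular_height_le_one[OF assms(2)])
  have le: "pstar_iter pc dm (n - 1) a \<sqinter> pstar_iter pc dm n a \<le> pstar_iter pc dm (Suc n) a" for a
    using pstar_identity_imp_le[of "n - 1" a] identity assms(5) by simp
  obtain u t where "minimal_in dual_space u" "comp_path dual_space u t n"
    "\<And>k. k < n \<Longrightarrow> \<not> comp_path dual_space u t k \<and> \<not> comp_path dual_space u (zeta dm t) k"
    using zeta_dist_minimal_witness[OF height assms(3,4,6)] by blast
  then show False
    using shortest_path_from_minimal_absurd[OF height assms(5) le] by blast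
qed

end
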